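(* Let $a\in\mathbb{C}$ and $\sigma>0$, and for integers $p\ge0$ let $F_{p,\sigma}(x)=\sum_{j=0}^p\frac{\Gamma(p-j+\sigma+1)}{\Gamma(j+1)\Gamma(p-j+1)}x^j$. Then the monic planar orthogonal polynomials with respect to the inner product $\langle f,g\rangle=\int_{\mathbb{C}}f(z)\overline{g(z)}\,\omega_\sigma(z)\,dA(z)$, $\omega_\sigma(z)=(1+|z-a|^2)e^{-\sigma|z|^2}$, are $$p_{k,\sigma}(z)=\sum_{j=0}^ka^{k-j}\frac{F_{j,\sigma}(\sigma|a|^2)}{F_{k,\sigma}(\sigma|a|^2)}z^j,\qquad k\ge0,$$ with squared norms $h_{k,\sigma}=\langle p_{k,\sigma},p_{k,\sigma}\rangle=\frac{(k+1)!}{\sigma^{k+2}}\frac{F_{k+1,\sigma}(\sigma|a|^2)}{F_{k,\sigma}(\sigma|a|^2)}$. Furthermore, for $k\ge1$, $$zp_{k,\sigma}(z)=p_{k+1,\sigma}(z)+b_kp_{k,\sigma}(z)+zc_kp_{k-1,\sigma}(z),\qquad b_k=-a\frac{F_{k,\sigma}(\sigma|a|^2)}{F_{k+1,\sigma}(\sigma|a|^2)},\quad c_k=a\frac{F_{k-1,\sigma}(\sigma|a|^2)}{F_{k,\sigma}(\sigma|a|^2)}.$$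
   Context: $dA(z)=d^2z/\pi$. Monic planar orthogonal polynomials: $p_k$ has degree $k$, leading coefficient $1$, and $\langle p_k,p_\ell\rangle=0$ for $k\neq\ell$. *)

theory Defs
  imports "HOL-Analysis.Analysis" "HOL-Computational_Algebra.Polynomial"
begin

definition Fps :: "nat \<Rightarrow> real \<Rightarrow> real \<Rightarrow> real" where
  "Fps p \<sigma> x = (\<Sum>j\<le>p. Gamma (real (p - j) + \<sigma> + 1)
                       / (Gamma (real j + 1) * Gamma (real (p - j) + 1)) * x ^ j)"

definition wgt :: "real \<Rightarrow> complex \<Rightarrow> complex \<Rightarrow> real" where
  "wgt \<sigma> a z = (1 + (cmod (z - a))\<^sup>2) * exp (- \<sigma> * (cmod z)\<^sup>2)"

text \<open>inner product <f,g> = int_C f(z) conj(g(z)) omega(z) dA(z), with dA = d^2z / pi\<close>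
definition ip :: "real \<Rightarrow> complex \<Rightarrow> (complex \<Rightarrow> complex) \<Rightarrow> (complex \<Rightarrow> complex) \<Rightarrow> complex" where
  "ip \<sigma> a f g = (LINT z|lborel. f z * cnj (g z) * complex_of_real (wgt \<sigma> a z)) / complex_of_real pi"

definition OP :: "real \<Rightarrow> complex \<Rightarrow> nat \<Rightarrow> complex poly" where
  "OP \<sigma> a k = (\<Sum>j\<le>k. monom (a ^ (k - j) *
      complex_of_real (Fps j \<sigma> (\<sigma> * (cmod a)\<^sup>2) / Fps k \<sigma> (\<sigma> * (cmod a)\<^sup>2))) j)"

end

(*
  For the Gaussian weight exp(-s|z|^2) dA the monomials are orthogonal,
  <z^j, z^m> = delta_jm j!/s^(j+1): integrating the x- and y-derivatives of
  z^j conj(z)^m exp(-s|z|^2) line by line gives a recurrence for these moments.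
  Since omega = (1 + |z-a|^2) exp(-s|z|^2), the pairing <P, z^m>_omega is the
  Gaussian pairing of P with z^m plus that of (z-a)P with (z-a)z^m, an explicit
  combination of three coefficients of P. For P = p_k and m < k this combination
  is a multiple of (m+1)F_(m+1) - (s+m+1+x)F_m + xF_(m-1) with x = s|a|^2, which
  vanishes by the three-term recurrence of F_p; for m = k it is the norm h_k.
  Orthogonality then follows by linearity and conjugate symmetry, and the
  recurrence for p_k is a comparison of coefficients.
*)

theory Submission
  imports Defs "HOL-Probability.Distributions"
begin

lemma Gamma_real_plus1: "(z::real) > 0 \<Longrightarrow> Gamma (z + 1) = z * Gamma z"
  by (rule Gamma_plus1) (auto dest: nonpos_Ints_nonpos)

lemma Fps_pos:
  assumes "s > -1" "x \<ge> 0"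
  shows "Fps p s x > 0"
  unfolding Fps_def
  using assms by (intro sum_pos2[where i=0])
    (auto intro!: divide_nonneg_pos mult_nonneg_nonneg mult_pos_pos Gamma_real_pos less_imp_le[OF Gamma_real_pos])

lemma Fps_eq_sum_fact:
  "Fps p s x = (\<Sum>j\<le>p. Gamma (real (p - j) + s + 1) / fact (p - j) * (x ^ j / fact j))"
  unfolding Fps_def by (intro sum.cong refl) (simp add: Gamma_fact[symmetric] add.commute)

lemma Fps_index_weighted_sum:
  "(\<Sum>j\<le>p. real j * (Gamma (real (p - j) + s + 1) / fact (p - j) * (x ^ j / fact j)))
    = x * (case p of 0 \<Rightarrow> 0 | Suc n \<Rightarrow> Fps n s x)"
proof (cases p)
  case (Suc n)
  have "(\<Sum>j\<le>Suc n. real j * (Gamma (real (Suc n - j) + s + 1) / fact (Suc n - j) * (x ^ j / fact j)))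
      = (\<Sum>j\<le>n. x * (Gamma (real (n - j) + s + 1) / fact (n - j) * (x ^ j / fact j)))"
    by (subst sum.atMost_Suc_shift) (simp add: fact_Suc mult_ac del: of_nat_Suc)
  then show ?thesis using Suc by (simp add: Fps_eq_sum_fact sum_distrib_left)
qed simp

(* Split the factor m+1 of the j-th term of F_(m+1) as (m+1-j) + j.  By the Gamma
   recurrence the first parts sum to (s+m+1) F_m minus the j-weighted sum of F_m,
   and a j-weighted sum is x times the preceding F_p (Fps_index_weighted_sum). *)
lemma Fps_recurrence:
  assumes "s > -1"
  shows "real (Suc m) * Fps (Suc m) s x
    = (s + real m + 1 + x) * Fps m s x - x * (case m of 0 \<Rightarrow> 0 | Suc n \<Rightarrow> Fps n s x)"
proof -
  define g where "g n = Gamma (real n + s + 1) / fact n" for n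
  define u where "u p j = g (p - j) * (x ^ j / fact j)" for p j
  have F: "Fps p s x = (\<Sum>j\<le>p. u p j)" for p
    unfolding Fps_eq_sum_fact u_def g_def ..
  have weighted: "(\<Sum>j\<le>p. real j * u p j) = x * (case p of 0 \<Rightarrow> 0 | Suc n \<Rightarrow> Fps n s x)" for p
    unfolding u_def g_def by (rule Fps_index_weighted_sum)
  have g_Suc: "real (Suc n) * g (Suc n) = (real n + s + 1) * g n" for n
  proof -
    have "Gamma (real (Suc n) + s + 1) = (real n + s + 1) * Gamma (real n + s + 1)"
      using Gamma_real_plus1[of "real n + s + 1"] assms by (simp add: add_ac)
    then show ?thesis unfolding g_def by (simp add: fact_Suc del: of_nat_Suc)
  qed
  have "(\<Sum>j\<le>Suc m. real (Suc m - j) * u (Suc m) j) = (\<Sum>j\<le>m. real (Suc m - j) * u (Suc m) j)"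
    by simp
  also have "\<dots> = (\<Sum>j\<le>m. (s + real m + 1 - real j) * u m j)"
  proof (intro sum.cong refl)
    fix j assume "j \<in> {..m}"
    then have "Suc m - j = Suc (m - j)" "real (m - j) = real m - real j" by auto
    then have "real (Suc m - j) * g (Suc m - j) = (s + real m + 1 - real j) * g (m - j)"
      using g_Suc[of "m - j"] by (simp add: algebra_simps del: of_nat_Suc)
    then show "real (Suc m - j) * u (Suc m) j = (s + real m + 1 - real j) * u m j"
      unfolding u_def by (metis mult.assoc)
  qed
  also have "\<dots> = (s + real m + 1) * Fps m s x - (\<Sum>j\<le>m. real j * u m j)"
    unfolding F by (simp add: sum_distrib_left left_diff_distrib sum_subtractf)
  finally have rest: "(\<Sum>j\<le>Suc m. real (Suc m - j) * u (Suc m) j)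
      = (s + real m + 1) * Fps m s x - x * (case m of 0 \<Rightarrow> 0 | Suc n \<Rightarrow> Fps n s x)"
    unfolding weighted .
  have "real (Suc m) * Fps (Suc m) s x
      = (\<Sum>j\<le>Suc m. real (Suc m - j) * u (Suc m) j) + (\<Sum>j\<le>Suc m. real j * u (Suc m) j)"
    unfolding F sum_distrib_left sum.distrib[symmetric]
    by (intro sum.cong refl) (simp add: algebra_simps of_nat_diff)
  also have "\<dots> = (s + real m + 1 + x) * Fps m s x - x * (case m of 0 \<Rightarrow> 0 | Suc n \<Rightarrow> Fps n s x)"
    unfolding rest weighted by (simp add: algebra_simps)
  finally show ?thesis .
qed

lemma exp_neg_square_eq_normal_density:
  fixes s :: real
  assumes "s > 0"
  shows "exp (- s * x\<^sup>2) = sqrt (pi / s) * normal_density 0 (1 / sqrt (2 * s)) x"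
proof -
  have "(1 / sqrt (2 * s))\<^sup>2 = 1 / (2 * s)" using assms by (simp add: power_divide)
  then show ?thesis using assms
    by (simp add: normal_density_def real_sqrt_divide real_sqrt_mult field_simps)
qed

lemma integrable_gaussian_power:
  fixes s :: real
  assumes "s > 0"
  shows "integrable lborel (\<lambda>x. exp (- s * x\<^sup>2) * x ^ k)"
proof -
  have "integrable lborel (\<lambda>x. sqrt (pi / s) * (normal_density 0 (1 / sqrt (2 * s)) x * (x - 0) ^ k))"
    using assms by (intro integrable_mult_right integrable_normal_moment) simp
  then show ?thesis unfolding exp_neg_square_eq_normal_density[OF assms] by (simp add: mult_ac)
qed

lemma integrable_gaussian_abs_power:
  fixes s :: real
  assumes "s > 0"
  shows "integrable lborel (\<lambda>x. exp (- s * x\<^sup>2) * \<bar>x\<bar> ^ k)"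
proof -
  have "integrable lborel (\<lambda>x. sqrt (pi / s) * (normal_density 0 (1 / sqrt (2 * s)) x * \<bar>x - 0\<bar> ^ k))"
    using assms by (intro integrable_mult_right integrable_normal_moment_abs) simp
  then show ?thesis unfolding exp_neg_square_eq_normal_density[OF assms] by (simp add: mult_ac)
qed

lemma integral_gaussian_power:
  fixes s :: real
  assumes "s > 0"
  shows "(\<integral>x. exp (- s * x\<^sup>2) * x ^ n \<partial>lborel)
    = (if even n then sqrt (pi / s) * fact n / ((4 * s) ^ (n div 2) * fact (n div 2)) else 0)"
proof (cases "even n")
  case True
  then obtain k where n: "n = 2 * k" by blast
  have "(2 / (1 / sqrt (2 * s))\<^sup>2) = 4 * s" using assms by (simp add: power_divide)
  then have "(\<integral>x. normal_density 0 (1 / sqrt (2 * s)) x * x ^ (2 * k) \<partial>lborel)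
      = fact (2 * k) / ((4 * s) ^ k * fact k)"
    using integral_normal_moment_even[of "1 / sqrt (2 * s)" 0 k] assms by simp
  then show ?thesis using n
    unfolding exp_neg_square_eq_normal_density[OF assms] by (simp add: mult.assoc)
next
  case False
  then obtain k where n: "n = 2 * k + 1" using oddE by blast
  have "(\<integral>x. normal_density 0 (1 / sqrt (2 * s)) x * x ^ (2 * k + 1) \<partial>lborel) = 0"
    using integral_normal_moment_odd[of "1 / sqrt (2 * s)" 0 k] assms by simp
  then show ?thesis using n
    unfolding exp_neg_square_eq_normal_density[OF assms] by (simp add: mult.assoc)
qed

lemma integral_gaussian_power_Suc:
  fixes s :: real
  assumes "s > 0"
  shows "2 * s * (\<integral>x. exp (- s * x\<^sup>2) * x ^ Suc n \<partial>lborel)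
    = real n * (\<integral>x. exp (- s * x\<^sup>2) * x ^ (n - 1) \<partial>lborel)"
proof (cases "even n")
  case True
  then show ?thesis unfolding integral_gaussian_power[OF assms] by (cases n) auto
next
  case False
  then obtain k where n: "n = 2 * k + 1" using oddE by blast
  have "Suc n = 2 * Suc k" using n by simp
  moreover have "(fact k :: real) > 0" "s ^ k > 0" "(4::real) ^ k > 0" using assms by auto
  ultimately show ?thesis using n assms
    unfolding integral_gaussian_power[OF assms] by (simp add: divide_simps power_mult_distrib)
qed

lemma integral_gaussian_pderiv:
  fixes P :: "complex poly" and s :: real
  assumes "s > 0"
  shows "(\<integral>x. (poly (pderiv P) (of_real x) - of_real (2 * s * x) * poly P (of_real x))
      * of_real (exp (- s * x\<^sup>2)) \<partial>lborel) = 0"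
proof -
  define m where "m k = (\<integral>x. exp (- s * x\<^sup>2) * x ^ k \<partial>lborel)" for k
  define h where "h n x = exp (- s * x\<^sup>2) * (real n * x ^ (n - 1) - 2 * s * x ^ Suc n)" for n x
  have h_eq: "h n = (\<lambda>x. real n * (exp (- s * x\<^sup>2) * x ^ (n - 1)) - 2 * s * (exp (- s * x\<^sup>2) * x ^ Suc n))"
    for n unfolding h_def by (auto simp: algebra_simps)
  have h_int: "integrable lborel (h n)" for n
    unfolding h_eq
    by (intro Bochner_Integration.integrable_diff integrable_mult_right integrable_gaussian_power assms)
  have h_zero: "(\<integral>x. h n x \<partial>lborel) = 0" for n
  proof -
    have "(\<integral>x. h n x \<partial>lborel) = real n * m (n - 1) - 2 * s * m (Suc n)"
      unfolding h_eq m_def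
      by (simp only: Bochner_Integration.integral_diff integral_mult_right_zero
          integrable_mult_right integrable_gaussian_power[OF assms])
    then show ?thesis using integral_gaussian_power_Suc[OF assms, of n] unfolding m_def by simp
  qed
  have P: "P = (\<Sum>n\<le>degree P. monom (coeff P n) n)"
    by (rule poly_as_sum_of_monoms[symmetric])
  have "(poly (pderiv P) (of_real x) - of_real (2 * s * x) * poly P (of_real x)) * of_real (exp (- s * x\<^sup>2))
      = (\<Sum>n\<le>degree P. coeff P n * of_real (h n x))" for x
    apply (subst (1 2) P)
    using higher_pderiv_sum[of 1 "\<lambda>n. monom (coeff P n) n" "{..degree P}"]
    by (simp add: poly_sum poly_monom pderiv_monom h_def sum_distrib_left sum_distrib_right
        sum_subtractf[symmetric] algebra_simps)
  then show ?thesis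
    by (simp only: Bochner_Integration.integral_sum integrable_mult_right integrable_of_real h_int
        integral_mult_right_zero integral_complex_of_real h_zero) simp
qed

lemma measurable_Complex_pair [measurable]:
  "(\<lambda>(x, y). Complex x y) \<in> borel_measurable (lborel \<Otimes>\<^sub>M lborel)"
proof -
  have "(\<lambda>(x, y). Complex x y) = (\<lambda>p. complex_of_real (fst p) + \<i> * complex_of_real (snd p))"
    by (auto simp: Complex_eq)
  then show ?thesis by simp
qed

lemma lborel_complex_eq_distr:
  "(lborel :: complex measure) = distr (lborel \<Otimes>\<^sub>M lborel) borel (\<lambda>(x, y). Complex x y)"
proof (rule lborel_eqI)
  fix l u :: complex
  assume le: "\<And>b. b \<in> Basis \<Longrightarrow> l \<bullet> b \<le> u \<bullet> b"
  have "Re l \<le> Re u" "Im l \<le> Im u" using le[of 1] le[of \<i>] by auto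
  moreover have "(\<lambda>(x, y). Complex x y) -` box l u \<inter> space (lborel \<Otimes>\<^sub>M lborel)
      = box (Re l) (Re u) \<times> box (Im l) (Im u)"
    by (auto simp: box_def Basis_complex_def space_pair_measure)
  ultimately show "emeasure (distr (lborel \<Otimes>\<^sub>M lborel) borel (\<lambda>(x, y). Complex x y)) (box l u)
      = (\<Prod>b\<in>Basis. (u - l) \<bullet> b)"
    by (simp add: emeasure_distr lborel.emeasure_pair_measure_Times ennreal_mult Basis_complex_def)
qed simp

lemma integrable_complex_iff_pair:
  fixes g :: "complex \<Rightarrow> 'a::{banach, second_countable_topology}"
  assumes [measurable]: "g \<in> borel_measurable borel"
  shows "integrable lborel g \<longleftrightarrow> integrable (lborel \<Otimes>\<^sub>M lborel) (\<lambda>(x, y). g (Complex x y))"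
  by (subst lborel_complex_eq_distr, subst integrable_distr_eq) (auto simp: split_beta')

lemma integral_complex_iterated:
  fixes g :: "complex \<Rightarrow> 'a::{banach, second_countable_topology}"
  assumes [measurable]: "g \<in> borel_measurable borel" and "integrable lborel g"
  shows "integral\<^sup>L lborel g = (\<integral>y. (\<integral>x. g (Complex x y) \<partial>lborel) \<partial>lborel)"
    and "integral\<^sup>L lborel g = (\<integral>x. (\<integral>y. g (Complex x y) \<partial>lborel) \<partial>lborel)"
proof -
  have int: "integrable (lborel \<Otimes>\<^sub>M lborel) (\<lambda>(x, y). g (Complex x y))"
    using assms integrable_complex_iff_pair by blast
  have eq: "integral\<^sup>L lborel g = integral\<^sup>L (lborel \<Otimes>\<^sub>M lborel) (\<lambda>(x, y). g (Complex x y))"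
    by (subst lborel_complex_eq_distr, subst integral_distr) (auto simp: split_beta')
  show "integral\<^sup>L lborel g = (\<integral>y. (\<integral>x. g (Complex x y) \<partial>lborel) \<partial>lborel)"
    unfolding eq by (rule lborel_pair.integral_snd[OF int, symmetric])
  show "integral\<^sup>L lborel g = (\<integral>x. (\<integral>y. g (Complex x y) \<partial>lborel) \<partial>lborel)"
    unfolding eq by (rule lborel_pair.integral_fst[OF int, symmetric])
qed

definition gaussian :: "real \<Rightarrow> complex \<Rightarrow> real" where
  "gaussian s z = exp (- s * (cmod z)\<^sup>2)"

lemma gaussian_measurable [measurable]: "gaussian s \<in> borel_measurable borel"
  unfolding gaussian_def[abs_def] by measurable

lemma gaussian_Complex: "gaussian s (Complex x y) = exp (- s * x\<^sup>2) * exp (- s * y\<^sup>2)"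
  unfolding gaussian_def cmod_power2 by (simp add: exp_add[symmetric] algebra_simps)

lemma integrable_gaussian_one_plus_abs_power:
  fixes s :: real
  assumes "s > 0"
  shows "integrable lborel (\<lambda>t. (1 + \<bar>t\<bar>) ^ N * exp (- s * t\<^sup>2))"
proof -
  have "(1 + \<bar>t\<bar>) ^ N * exp (- s * t\<^sup>2) = (\<Sum>k\<le>N. real (N choose k) * (exp (- s * t\<^sup>2) * \<bar>t\<bar> ^ k))"
    for t :: real
    using binomial_ring[of "\<bar>t\<bar>" 1 N] by (simp add: add.commute sum_distrib_left mult_ac)
  then show ?thesis
    by (simp only:) (intro Bochner_Integration.integrable_sum integrable_mult_right
        integrable_gaussian_abs_power assms)
qed

lemma one_plus_cmod_Complex_le: "1 + cmod (Complex x y) \<le> (1 + \<bar>x\<bar>) * (1 + \<bar>y\<bar>)"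
proof -
  have "cmod (Complex x y) \<le> \<bar>x\<bar> + \<bar>y\<bar>" using cmod_le[of "Complex x y"] by simp
  moreover have "(1 + \<bar>x\<bar>) * (1 + \<bar>y\<bar>) = 1 + \<bar>x\<bar> + \<bar>y\<bar> + \<bar>x\<bar> * \<bar>y\<bar>"
    by (simp add: algebra_simps)
  ultimately show ?thesis using zero_le_mult_iff[of "\<bar>x\<bar>" "\<bar>y\<bar>"] by linarith
qed

lemma integrable_gaussian_polynomial_growth:
  fixes f :: "complex \<Rightarrow> complex"
  assumes "s > 0" and [measurable]: "f \<in> borel_measurable borel"
    and bound: "\<And>z. norm (f z) \<le> C * (1 + cmod z) ^ N"
  shows "integrable lborel (\<lambda>z. f z * of_real (gaussian s z))"
proof -
  define B where "B t = (1 + \<bar>t\<bar>) ^ N * exp (- s * t\<^sup>2)" for t :: real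
  have B_int: "integrable lborel B"
    unfolding B_def[abs_def] by (rule integrable_gaussian_one_plus_abs_power[OF assms(1)])
  have [measurable]: "B \<in> borel_measurable borel" unfolding B_def[abs_def] by measurable
  have B_nonneg: "B t \<ge> 0" for t unfolding B_def by simp
  have "C \<ge> 0" using bound[of 0] norm_ge_zero[of "f 0"] by (simp del: norm_ge_zero)
  have "integrable (lborel \<Otimes>\<^sub>M lborel) (\<lambda>(x, y). B x * B y)"
    by (rule lborel_pair.Fubini_integrable)
      (use B_int in \<open>auto simp: B_nonneg abs_mult split_beta'\<close>)
  then have dominant: "integrable (lborel \<Otimes>\<^sub>M lborel) (\<lambda>p. C * (B (fst p) * B (snd p)))"
    by (simp add: split_beta')
  have "norm (f (Complex x y) * of_real (gaussian s (Complex x y))) \<le> norm (C * (B x * B y))" for x y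
  proof -
    have "norm (f (Complex x y)) \<le> C * ((1 + \<bar>x\<bar>) * (1 + \<bar>y\<bar>)) ^ N"
      using bound[of "Complex x y"] one_plus_cmod_Complex_le[of x y] \<open>C \<ge> 0\<close>
      by (meson mult_left_mono order_trans power_mono add_nonneg_nonneg norm_ge_zero zero_le_one)
    then have "norm (f (Complex x y)) * gaussian s (Complex x y)
        \<le> C * ((1 + \<bar>x\<bar>) * (1 + \<bar>y\<bar>)) ^ N * gaussian s (Complex x y)"
      by (rule mult_right_mono) (simp add: gaussian_def)
    then show ?thesis
      using \<open>C \<ge> 0\<close> unfolding gaussian_Complex B_def
      by (simp add: norm_mult abs_mult power_mult_distrib mult_ac)
  qed
  then have "integrable (lborel \<Otimes>\<^sub>M lborel)
      (\<lambda>p. f (Complex (fst p) (snd p)) * of_real (gaussian s (Complex (fst p) (snd p))))"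
    using measurable_Complex_pair
    by (intro Bochner_Integration.integrable_bound[OF dominant]) (auto simp: split_beta')
  then show ?thesis by (simp add: integrable_complex_iff_pair split_beta')
qed

lemma borel_measurable_cnj [measurable]: "cnj \<in> borel_measurable borel"
  by (intro borel_measurable_continuous_onI continuous_on_cnj continuous_on_id)

lemma integrable_gaussian_power_cnj_power:
  assumes "s > 0"
  shows "integrable lborel (\<lambda>z. z ^ j * cnj z ^ m * of_real (gaussian s z))"
proof (rule integrable_gaussian_polynomial_growth[OF assms, where C = 1 and N = "j + m"])
  fix z :: complex
  have "norm (z ^ j * cnj z ^ m) \<le> (1 + cmod z) ^ j * (1 + cmod z) ^ m"
    by (simp add: norm_mult norm_power mult_mono power_mono)
  then show "norm (z ^ j * cnj z ^ m) \<le> 1 * (1 + cmod z) ^ (j + m)"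
    by (simp add: power_add)
qed measurable

definition gaussian_moment :: "real \<Rightarrow> nat \<Rightarrow> nat \<Rightarrow> complex" where
  "gaussian_moment s j m = (\<integral>z. z ^ j * cnj z ^ m * of_real (gaussian s z) \<partial>lborel)"

lemma
  fixes a b c d :: complex and s :: real and j m :: nat
  assumes "s > 0"
  defines "F \<equiv> \<lambda>z. (a * z ^ (j - 1) * cnj z ^ m + b * z ^ j * cnj z ^ (m - 1)
      + c * z ^ Suc j * cnj z ^ m + d * z ^ j * cnj z ^ Suc m) * of_real (gaussian s z)"
  shows integrable_gaussian_moment_combination: "integrable lborel F"
    and integral_gaussian_moment_combination: "integral\<^sup>L lborel F
      = a * gaussian_moment s (j - 1) m + b * gaussian_moment s j (m - 1)
        + c * gaussian_moment s (Suc j) m + d * gaussian_moment s j (Suc m)"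
proof -
  have F: "F = (\<lambda>z. a * (z ^ (j - 1) * cnj z ^ m * of_real (gaussian s z))
      + b * (z ^ j * cnj z ^ (m - 1) * of_real (gaussian s z))
      + c * (z ^ Suc j * cnj z ^ m * of_real (gaussian s z))
      + d * (z ^ j * cnj z ^ Suc m * of_real (gaussian s z)))"
    unfolding F_def by (auto simp: algebra_simps)
  show "integrable lborel F"
    unfolding F by (intro Bochner_Integration.integrable_add integrable_mult_right
        integrable_gaussian_power_cnj_power assms(1))
  show "integral\<^sup>L lborel F = a * gaussian_moment s (j - 1) m + b * gaussian_moment s j (m - 1)
        + c * gaussian_moment s (Suc j) m + d * gaussian_moment s j (Suc m)"
    unfolding F gaussian_moment_def
    by (simp only: Bochner_Integration.integral_add Bochner_Integration.integrable_add
        integral_mult_right_zero integrable_mult_right integrable_gaussian_power_cnj_power[OF assms(1)])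
qed

text \<open>The integrands below are \<open>\<partial>/\<partial>x\<close> and \<open>-i \<partial>/\<partial>y\<close> of \<open>z^j conj(z)^m exp(-s|z|^2)\<close>,
  so they integrate to zero along every horizontal, resp. vertical, line.\<close>

lemma gaussian_moment_ibp_Re:
  assumes "s > 0"
  shows "of_nat j * gaussian_moment s (j - 1) m + of_nat m * gaussian_moment s j (m - 1)
    - of_real s * gaussian_moment s (Suc j) m - of_real s * gaussian_moment s j (Suc m) = 0"
proof -
  define F where "F z = (of_nat j * z ^ (j - 1) * cnj z ^ m + of_nat m * z ^ j * cnj z ^ (m - 1)
      + - of_real s * z ^ Suc j * cnj z ^ m + - of_real s * z ^ j * cnj z ^ Suc m) * of_real (gaussian s z)"
    for z
  have [measurable]: "F \<in> borel_measurable borel"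
    unfolding F_def[abs_def] gaussian_def by (intro borel_measurable_continuous_onI continuous_intros)
  have "(\<integral>x. F (Complex x y) \<partial>lborel) = 0" for y
  proof -
    define P where "P = [:\<i> * of_real y, 1:] ^ j * [:- \<i> * of_real y, 1:] ^ m"
    have "(\<integral>x. F (Complex x y) \<partial>lborel) = (\<integral>x. ((poly (pderiv P) (of_real x)
        - of_real (2 * s * x) * poly P (of_real x)) * of_real (exp (- s * x\<^sup>2))) * of_real (exp (- s * y\<^sup>2)) \<partial>lborel)"
      unfolding F_def gaussian_Complex
      by (intro Bochner_Integration.integral_cong refl)
        (simp add: P_def pderiv_mult pderiv_power pderiv_pCons Complex_eq algebra_simps)
    then show ?thesis using integral_gaussian_pderiv[OF assms, of P] by simp
  qed
  moreover have "integrable lborel F"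
    unfolding F_def[abs_def] by (rule integrable_gaussian_moment_combination[OF assms])
  ultimately have "integral\<^sup>L lborel F = 0" using integral_complex_iterated(1)[of F] by simp
  then show ?thesis unfolding F_def[abs_def] integral_gaussian_moment_combination[OF assms] by simp
qed

lemma gaussian_moment_ibp_Im:
  assumes "s > 0"
  shows "of_nat j * gaussian_moment s (j - 1) m - of_nat m * gaussian_moment s j (m - 1)
    + of_real s * gaussian_moment s (Suc j) m - of_real s * gaussian_moment s j (Suc m) = 0"
proof -
  define F where "F z = (of_nat j * z ^ (j - 1) * cnj z ^ m + - of_nat m * z ^ j * cnj z ^ (m - 1)
      + of_real s * z ^ Suc j * cnj z ^ m + - of_real s * z ^ j * cnj z ^ Suc m) * of_real (gaussian s z)"
    for z
  have [measurable]: "F \<in> borel_measurable borel"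
    unfolding F_def[abs_def] gaussian_def by (intro borel_measurable_continuous_onI continuous_intros)
  have "(\<integral>y. F (Complex x y) \<partial>lborel) = 0" for x
  proof -
    define P where "P = [:of_real x, \<i>:] ^ j * [:of_real x, - \<i>:] ^ m"
    have "(\<integral>y. F (Complex x y) \<partial>lborel) = (\<integral>y. (- \<i> * ((poly (pderiv P) (of_real y)
        - of_real (2 * s * y) * poly P (of_real y)) * of_real (exp (- s * y\<^sup>2)))) * of_real (exp (- s * x\<^sup>2)) \<partial>lborel)"
      unfolding F_def gaussian_Complex
      by (intro Bochner_Integration.integral_cong refl)
        (simp add: P_def pderiv_mult pderiv_power pderiv_pCons Complex_eq algebra_simps)
    then show ?thesis using integral_gaussian_pderiv[OF assms, of P] by simp
  qed
  moreover have "integrable lborel F"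
    unfolding F_def[abs_def] by (rule integrable_gaussian_moment_combination[OF assms])
  ultimately have "integral\<^sup>L lborel F = 0" using integral_complex_iterated(2)[of F] by simp
  then show ?thesis unfolding F_def[abs_def] integral_gaussian_moment_combination[OF assms] by simp
qed

lemma gaussian_moment_Suc:
  assumes "s > 0"
  shows "of_real s * gaussian_moment s (Suc j) m = of_nat m * gaussian_moment s j (m - 1)"
proof -
  have "2 * (of_nat m * gaussian_moment s j (m - 1) - of_real s * gaussian_moment s (Suc j) m) = 0"
    using arg_cong2[where f = minus, OF gaussian_moment_ibp_Re[OF assms, of j m]
        gaussian_moment_ibp_Im[OF assms, of j m]]
    by (simp add: algebra_simps)
  then show ?thesis by simp
qed

lemma gaussian_moment_swap: "gaussian_moment s m j = cnj (gaussian_moment s j m)"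
proof -
  have "gaussian_moment s m j = (\<integral>z. cnj (z ^ j * cnj z ^ m * of_real (gaussian s z)) \<partial>lborel)"
    unfolding gaussian_moment_def by (simp add: mult_ac)
  then show ?thesis
    unfolding gaussian_moment_def
    using Bochner_Integration.integral_cnj[of lborel "\<lambda>z. z ^ j * cnj z ^ m * of_real (gaussian s z)"] by simp
qed

lemma gaussian_moment_0_0:
  assumes "s > 0"
  shows "gaussian_moment s 0 0 = of_real (pi / s)"
proof -
  have exp_integral: "(\<integral>x. exp (- s * x\<^sup>2) \<partial>lborel) = sqrt (pi / s)"
    using integral_gaussian_power[OF assms, of 0] by simp
  have int: "integrable lborel (\<lambda>z. complex_of_real (gaussian s z))"
    using integrable_gaussian_power_cnj_power[OF assms, of 0 0] by simp
  have "gaussian_moment s 0 0 = (\<integral>y. (\<integral>x. of_real (gaussian s (Complex x y)) \<partial>lborel) \<partial>lborel)"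
    unfolding gaussian_moment_def power_0 mult_1_left by (rule integral_complex_iterated(1)[OF _ int]) measurable
  also have "\<dots> = (\<integral>y. of_real (sqrt (pi / s) * exp (- s * y\<^sup>2)) \<partial>lborel)"
    unfolding gaussian_Complex by (simp only: integral_complex_of_real integral_mult_left_zero exp_integral)
  also have "\<dots> = of_real (sqrt (pi / s) * sqrt (pi / s))"
    by (simp only: integral_complex_of_real integral_mult_right_zero exp_integral)
  finally show ?thesis using assms by simp
qed

lemma gaussian_moment_eq:
  assumes "s > 0"
  shows "gaussian_moment s j m = (if j = m then of_real (pi * fact j / s ^ (j + 1)) else 0)"
proof (induction j arbitrary: m)
  case 0
  show ?case
  proof (cases m)
    case (Suc k)
    then show ?thesis
      using gaussian_moment_Suc[OF assms, of k 0] gaussian_moment_swap[of s 0 m] assms by simp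
  qed (simp add: gaussian_moment_0_0 assms)
next
  case (Suc j)
  show ?case
  proof (cases m)
    case 0
    then show ?thesis using gaussian_moment_Suc[OF assms, of j 0] assms by simp
  next
    case (Suc k)
    then show ?thesis
      using gaussian_moment_Suc[OF assms, of j m] Suc.IH[of k] assms by (auto simp: field_simps)
  qed
qed

lemma
  fixes P :: "complex poly"
  assumes "s > 0"
  shows integrable_gaussian_poly_cnj_power:
      "integrable lborel (\<lambda>z. poly P z * cnj z ^ m * of_real (gaussian s z))"
    and integral_gaussian_poly_cnj_power:
      "(\<integral>z. poly P z * cnj z ^ m * of_real (gaussian s z) \<partial>lborel)
        = of_real (pi * fact m / s ^ (m + 1)) * coeff P m"
proof -
  have eq: "(\<lambda>z. poly P z * cnj z ^ m * of_real (gaussian s z))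
      = (\<lambda>z. \<Sum>j\<le>degree P. coeff P j * (z ^ j * cnj z ^ m * of_real (gaussian s z)))"
    by (simp add: poly_altdef sum_distrib_right mult.assoc)
  show "integrable lborel (\<lambda>z. poly P z * cnj z ^ m * of_real (gaussian s z))"
    unfolding eq by (intro Bochner_Integration.integrable_sum integrable_mult_right
        integrable_gaussian_power_cnj_power assms)
  have "(\<integral>z. poly P z * cnj z ^ m * of_real (gaussian s z) \<partial>lborel)
      = (\<Sum>j\<le>degree P. coeff P j * gaussian_moment s j m)"
    unfolding eq gaussian_moment_def
    by (simp only: Bochner_Integration.integral_sum integral_mult_right_zero integrable_mult_right
        integrable_gaussian_power_cnj_power[OF assms])
  also have "\<dots> = of_real (pi * fact m / s ^ (m + 1)) * coeff P m"
    by (simp add: gaussian_moment_eq[OF assms] if_distrib[of "\<lambda>x. coeff P _ * x"] sum.delta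
        coeff_eq_0 mult.commute cong: if_cong)
  finally show "(\<integral>z. poly P z * cnj z ^ m * of_real (gaussian s z) \<partial>lborel)
      = of_real (pi * fact m / s ^ (m + 1)) * coeff P m" .
qed

lemma of_real_wgt: "complex_of_real (wgt s a z) = (1 + (z - a) * cnj (z - a)) * of_real (gaussian s z)"
  unfolding wgt_def gaussian_def of_real_mult of_real_add complex_norm_square by simp

lemma wgt_poly_cnj_power_eq:
  "poly P z * cnj z ^ m * of_real (wgt s a z)
    = poly P z * cnj z ^ m * of_real (gaussian s z)
      + poly ([:- a, 1:] * P) z * cnj z ^ Suc m * of_real (gaussian s z)
      - cnj a * (poly ([:- a, 1:] * P) z * cnj z ^ m * of_real (gaussian s z))"
  unfolding of_real_wgt by (simp add: algebra_simps)

lemma integrable_wgt_poly_cnj_power: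
  "s > 0 \<Longrightarrow> integrable lborel (\<lambda>z. poly P z * cnj z ^ m * of_real (wgt s a z))"
  unfolding wgt_poly_cnj_power_eq
  by (intro Bochner_Integration.integrable_diff Bochner_Integration.integrable_add
      integrable_mult_right integrable_gaussian_poly_cnj_power)

lemma ip_poly_power:
  assumes "s > 0"
  shows "ip s a (poly P) (\<lambda>z. z ^ m)
    = of_real (fact m / s ^ (m + 1)) * coeff P m
      + of_real (fact (Suc m) / s ^ (m + 2)) * coeff ([:- a, 1:] * P) (Suc m)
      - cnj a * of_real (fact m / s ^ (m + 1)) * coeff ([:- a, 1:] * P) m"
proof -
  define R where "R = [:- a, 1:] * P"
  have "(\<integral>z. poly P z * cnj z ^ m * of_real (wgt s a z) \<partial>lborel)
      = of_real (pi * fact m / s ^ (m + 1)) * coeff P m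
        + of_real (pi * fact (Suc m) / s ^ (Suc m + 1)) * coeff R (Suc m)
        - cnj a * (of_real (pi * fact m / s ^ (m + 1)) * coeff R m)"
    unfolding wgt_poly_cnj_power_eq R_def[symmetric]
    by (simp only: Bochner_Integration.integral_diff Bochner_Integration.integral_add
        Bochner_Integration.integrable_diff Bochner_Integration.integrable_add integral_mult_right_zero
        integrable_mult_right integrable_gaussian_poly_cnj_power[OF assms]
        integral_gaussian_poly_cnj_power[OF assms])
  then show ?thesis
    unfolding ip_def R_def[symmetric] by (simp add: field_simps)
qed

lemma
  assumes "s > 0"
  shows integrable_wgt_poly_poly:
      "integrable lborel (\<lambda>z. poly P z * cnj (poly Q z) * of_real (wgt s a z))"
    and ip_poly_poly_eq_sum:
      "ip s a (poly P) (poly Q) = (\<Sum>m\<le>degree Q. cnj (coeff Q m) * ip s a (poly P) (\<lambda>z. z ^ m))"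
proof -
  have eq: "(\<lambda>z. poly P z * cnj (poly Q z) * of_real (wgt s a z))
      = (\<lambda>z. \<Sum>m\<le>degree Q. cnj (coeff Q m) * (poly P z * cnj z ^ m * of_real (wgt s a z)))"
    by (simp add: poly_altdef sum_distrib_left sum_distrib_right mult_ac)
  show "integrable lborel (\<lambda>z. poly P z * cnj (poly Q z) * of_real (wgt s a z))"
    unfolding eq by (intro Bochner_Integration.integrable_sum integrable_mult_right
        integrable_wgt_poly_cnj_power assms)
  show "ip s a (poly P) (poly Q) = (\<Sum>m\<le>degree Q. cnj (coeff Q m) * ip s a (poly P) (\<lambda>z. z ^ m))"
    unfolding ip_def eq
    by (simp add: Bochner_Integration.integral_sum integrable_wgt_poly_cnj_power[OF assms]
        sum_divide_distrib)
qed

lemma ip_swap: "ip s a g f = cnj (ip s a f g)"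
proof -
  have "ip s a g f = (\<integral>z. cnj (f z * cnj (g z) * of_real (wgt s a z)) \<partial>lborel) / of_real pi"
    unfolding ip_def by (simp add: mult_ac)
  then show ?thesis
    unfolding ip_def
    using Bochner_Integration.integral_cnj[of lborel "\<lambda>z. f z * cnj (g z) * of_real (wgt s a z)"]
    by simp
qed

lemma coeff_linear_factor_mult:
  fixes a :: "'a::comm_ring_1"
  shows "coeff ([:- a, 1:] * P) n = coeff (pCons 0 P) n - a * coeff P n"
  by (simp add: mult_pCons_left)

lemma coeff_OP:
  "coeff (OP s a k) j = (if j \<le> k
    then a ^ (k - j) * of_real (Fps j s (s * (cmod a)\<^sup>2) / Fps k s (s * (cmod a)\<^sup>2)) else 0)"
  unfolding OP_def coeff_sum coeff_monom by (simp add: sum.delta)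

lemma
  assumes "s \<ge> 0"
  shows degree_OP: "degree (OP s a k) = k"
    and lead_coeff_OP: "lead_coeff (OP s a k) = 1"
proof -
  have "Fps k s (s * (cmod a)\<^sup>2) > 0" using assms by (intro Fps_pos) auto
  then have "coeff (OP s a k) k = 1" by (simp add: coeff_OP)
  moreover have "coeff (OP s a k) j = 0" if "j > k" for j using that by (simp add: coeff_OP)
  ultimately show "degree (OP s a k) = k"
    by (intro antisym degree_le le_degree) auto
  then show "lead_coeff (OP s a k) = 1" using \<open>coeff (OP s a k) k = 1\<close> by simp
qed

lemma ip_OP_power_expansion:
  fixes a :: complex
  assumes "s > 0" and "m \<le> k"
  defines "N \<equiv> (cmod a)\<^sup>2"
  defines "F \<equiv> \<lambda>j. Fps j s (s * N)" and "\<mu> \<equiv> \<lambda>j. fact j / s ^ (j + 1)"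
  defines "F' \<equiv> (case m of 0 \<Rightarrow> 0 | Suc n \<Rightarrow> F n)"
  shows "ip s a (poly (OP s a k)) (\<lambda>z. z ^ m) = a ^ (k - m) * of_real ((\<mu> m * F m
    + \<mu> (Suc m) * (F m - (if m < k then F (Suc m) else 0)) - \<mu> m * N * F' + \<mu> m * N * F m) / F k)"
proof -
  define c where "c = coeff (OP s a k)"
  have F_pos: "F j > 0" for j unfolding F_def N_def using assms(1) by (intro Fps_pos) auto
  have aa: "cnj a * a = of_real N"
    unfolding N_def using complex_norm_square[of a] by (simp add: mult.commute)
  have c_m: "c m = a ^ (k - m) * of_real (F m / F k)"
    using assms(2) by (simp add: c_def coeff_OP F_def N_def)
  have c_Suc: "a * c (Suc m) = a ^ (k - m) * of_real (if m < k then F (Suc m) / F k else 0)"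
  proof (cases "m < k")
    case True
    then have "k - m = Suc (k - Suc m)" by simp
    then show ?thesis using True by (simp add: c_def coeff_OP F_def N_def)
  qed (simp add: c_def coeff_OP)
  have c_pred: "cnj a * coeff (pCons 0 (OP s a k)) m = a ^ (k - m) * of_real (N * F' / F k)"
  proof (cases m)
    case (Suc n)
    then have "k - n = Suc (k - m)" using assms(2) by simp
    then show ?thesis using Suc assms(2)
      by (simp add: coeff_OP F_def F'_def N_def mult.assoc[symmetric] aa[unfolded N_def])
  qed (simp add: F'_def)
  have "ip s a (poly (OP s a k)) (\<lambda>z. z ^ m)
      = of_real (\<mu> m) * c m + of_real (\<mu> (Suc m)) * (c m - a * c (Suc m))
        - of_real (\<mu> m) * (cnj a * coeff (pCons 0 (OP s a k)) m) + of_real (\<mu> m) * (cnj a * a) * c m"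
    unfolding ip_poly_power[OF assms(1)] coeff_linear_factor_mult c_def \<mu>_def
    by (simp add: algebra_simps)
  also have "\<dots> = a ^ (k - m) * of_real ((\<mu> m * F m
      + \<mu> (Suc m) * (F m - (if m < k then F (Suc m) else 0)) - \<mu> m * N * F' + \<mu> m * N * F m) / F k)"
    using F_pos[of k] unfolding c_Suc c_pred aa c_m by (simp add: field_simps)
  finally show ?thesis .
qed

lemma ip_OP_power:
  assumes "s > 0" and "m \<le> k"
  shows "ip s a (poly (OP s a k)) (\<lambda>z. z ^ m) = (if m = k then
    of_real (fact (k + 1) / s ^ (k + 2) * (Fps (k + 1) s (s * (cmod a)\<^sup>2) / Fps k s (s * (cmod a)\<^sup>2)))
    else 0)"
proof -
  define N where "N = (cmod a)\<^sup>2"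
  define F where "F j = Fps j s (s * N)" for j
  define F' where "F' = (case m of 0 \<Rightarrow> 0 | Suc n \<Rightarrow> F n)"
  define \<mu> where "\<mu> j = fact j / s ^ (j + 1)" for j
  have rec: "real (Suc m) * F (Suc m) = (s + real m + 1 + s * N) * F m - s * N * F'"
    using Fps_recurrence[of s m "s * N"] assms(1) unfolding F_def F'_def by (simp split: nat.split)
  have \<mu>_Suc: "\<mu> (Suc m) = \<mu> m * real (Suc m) / s"
    unfolding \<mu>_def using assms(1) by (simp add: field_simps)
  have "ip s a (poly (OP s a k)) (\<lambda>z. z ^ m) = a ^ (k - m) * of_real ((\<mu> m * F m
      + \<mu> (Suc m) * (F m - (if m < k then F (Suc m) else 0)) - \<mu> m * N * F' + \<mu> m * N * F m) / F k)"
    unfolding N_def F_def F'_def \<mu>_def by (rule ip_OP_power_expansion[OF assms])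
  also have "\<mu> m * F m + \<mu> (Suc m) * (F m - (if m < k then F (Suc m) else 0)) - \<mu> m * N * F' + \<mu> m * N * F m
      = \<mu> m / s * ((s + real m + 1 + s * N) * F m - s * N * F'
          - (if m < k then real (Suc m) * F (Suc m) else 0))"
    using assms(1) unfolding \<mu>_Suc by (simp add: field_simps)
  also have "\<dots> = (if m = k then \<mu> (Suc m) * F (Suc m) else 0)"
    using assms(2) unfolding rec[symmetric] \<mu>_Suc by auto
  finally show ?thesis
    by (simp add: \<mu>_def F_def N_def)
qed

lemma ip_OP_OP_less:
  assumes "s > 0" and "l < k"
  shows "ip s a (poly (OP s a k)) (poly (OP s a l)) = 0"
  unfolding ip_poly_poly_eq_sum[OF assms(1)] degree_OP[OF less_imp_le[OF assms(1)]]
  using assms by (intro sum.neutral) (auto simp: ip_OP_power)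

lemma ip_OP_OP_neq:
  assumes "s > 0" and "k \<noteq> l"
  shows "ip s a (poly (OP s a k)) (poly (OP s a l)) = 0"
proof (cases "l < k")
  case False
  then show ?thesis
    using ip_OP_OP_less[OF assms(1), of k l a] ip_swap[of s a "poly (OP s a k)"] assms(2) by simp
qed (use ip_OP_OP_less[OF assms(1)] in simp)

lemma ip_OP_OP_self:
  assumes "s > 0"
  shows "ip s a (poly (OP s a k)) (poly (OP s a k))
    = of_real (fact (k + 1) / s ^ (k + 2) * (Fps (k + 1) s (s * (cmod a)\<^sup>2) / Fps k s (s * (cmod a)\<^sup>2)))"
proof -
  have s: "s \<ge> 0" using assms by simp
  have "ip s a (poly (OP s a k)) (poly (OP s a k))
      = (\<Sum>m\<le>k. cnj (coeff (OP s a k) m) * ip s a (poly (OP s a k)) (\<lambda>z. z ^ m))"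
    unfolding ip_poly_poly_eq_sum[OF assms] degree_OP[OF s] ..
  also have "\<dots> = cnj (lead_coeff (OP s a k)) * ip s a (poly (OP s a k)) (\<lambda>z. z ^ k)"
    by (subst sum.remove[of _ k]) (auto simp: ip_OP_power[OF assms] degree_OP[OF s] intro!: sum.neutral)
  finally show ?thesis by (simp add: lead_coeff_OP[OF s] ip_OP_power[OF assms])
qed

lemma OP_three_term_recurrence:
  fixes a :: complex
  assumes "s \<ge> 0" and "k \<ge> 1"
  defines "F \<equiv> \<lambda>j. Fps j s (s * (cmod a)\<^sup>2)"
  shows "pCons 0 (OP s a k) = OP s a (k + 1) + smult (- a * of_real (F k / F (k + 1))) (OP s a k)
    + pCons 0 (smult (a * of_real (F (k - 1) / F k)) (OP s a (k - 1)))"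
proof (rule poly_eqI)
  fix n
  have F_pos: "F j > 0" for j unfolding F_def using assms(1) by (intro Fps_pos) auto
  have coeff: "coeff (OP s a p) j = (if j \<le> p then a ^ (p - j) * of_real (F j / F p) else 0)" for p j
    unfolding F_def by (rule coeff_OP)
  show "coeff (pCons 0 (OP s a k)) n = coeff (OP s a (k + 1) + smult (- a * of_real (F k / F (k + 1))) (OP s a k)
    + pCons 0 (smult (a * of_real (F (k - 1) / F k)) (OP s a (k - 1)))) n"
  proof (cases n)
    case 0
    then show ?thesis using F_pos[of k] F_pos[of "k + 1"] by (simp add: coeff field_simps)
  next
    case (Suc j)
    consider "j < k" | "j = k" | "j > k" by linarith
    then show ?thesis
    proof cases
      case 1
      then have "k + 1 - Suc j = k - j" "k - j = Suc (k - 1 - j)" using assms(2) by auto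
      then show ?thesis
        using 1 Suc F_pos[of k] F_pos[of "k + 1"] F_pos[of "k - 1"] by (simp add: coeff field_simps)
    next
      case 2
      then show ?thesis using Suc assms(2) F_pos[of k] F_pos[of "k + 1"] by (simp add: coeff)
    qed (use Suc in \<open>simp add: coeff\<close>)
  qed
qed

theorem propositionA1:
  fixes a :: complex and \<sigma> :: real
  assumes "\<sigma> > 0"
  shows "(\<forall>k. degree (OP \<sigma> a k) = k \<and> lead_coeff (OP \<sigma> a k) = 1)
    \<and> (\<forall>k l. integrable lborel
          (\<lambda>z. poly (OP \<sigma> a k) z * cnj (poly (OP \<sigma> a l) z) * complex_of_real (wgt \<sigma> a z)))
    \<and> (\<forall>k l. k \<noteq> l \<longrightarrow> ip \<sigma> a (poly (OP \<sigma> a k)) (poly (OP \<sigma> a l)) = 0)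
    \<and> (\<forall>k. ip \<sigma> a (poly (OP \<sigma> a k)) (poly (OP \<sigma> a k)) =
          complex_of_real (fact (k + 1) / \<sigma> ^ (k + 2)
            * (Fps (k + 1) \<sigma> (\<sigma> * (cmod a)\<^sup>2) / Fps k \<sigma> (\<sigma> * (cmod a)\<^sup>2))))
    \<and> (\<forall>k\<ge>1. \<forall>z. z * poly (OP \<sigma> a k) z =
          poly (OP \<sigma> a (k + 1)) z
          + (- a * complex_of_real (Fps k \<sigma> (\<sigma> * (cmod a)\<^sup>2) / Fps (k + 1) \<sigma> (\<sigma> * (cmod a)\<^sup>2)))
              * poly (OP \<sigma> a k) z
          + z * (a * complex_of_real (Fps (k - 1) \<sigma> (\<sigma> * (cmod a)\<^sup>2) / Fps k \<sigma> (\<sigma> * (cmod a)\<^sup>2)))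
              * poly (OP \<sigma> a (k - 1)) z)"
proof -
  have s: "\<sigma> \<ge> 0" using assms by simp
  have recurrence: "z * poly (OP \<sigma> a k) z =
      poly (OP \<sigma> a (k + 1)) z
      + (- a * complex_of_real (Fps k \<sigma> (\<sigma> * (cmod a)\<^sup>2) / Fps (k + 1) \<sigma> (\<sigma> * (cmod a)\<^sup>2)))
          * poly (OP \<sigma> a k) z
      + z * (a * complex_of_real (Fps (k - 1) \<sigma> (\<sigma> * (cmod a)\<^sup>2) / Fps k \<sigma> (\<sigma> * (cmod a)\<^sup>2)))
          * poly (OP \<sigma> a (k - 1)) z" if "k \<ge> 1" for k z
    using arg_cong[where f = "\<lambda>p. poly p z", OF OP_three_term_recurrence[OF s that, of a]]
    by (simp add: algebra_simps)
  show ?thesis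
    using degree_OP[OF s] lead_coeff_OP[OF s] integrable_wgt_poly_poly[OF assms]
      ip_OP_OP_neq[OF assms] ip_OP_OP_self[OF assms] recurrence
    by blast
qed

end
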